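(* Let $z\in\mathbb{C}$, let $s\ge 2$ be an integer and $a$ a parameter for which $\Phi(z,s,a)$ is defined. If the integral converges, then \[ \frac{(s-2)(-1)^s}{s}\,\Phi(z,s,a)\,\Gamma(s)=\int_0^1\!\!\int_0^1\frac{(xy)^{a-1}}{(1-zxy)\log(xy)}\sum_{k=1}^{s-2}\binom{s-1}{k}\log^k(x)\log^{s-k-1}(y)\,dx\,dy. \]
   Context: The Lerch transcendent is $\Phi(z,s,a)=\sum_{k=0}^\infty \frac{z^k}{(k+a)^s}$ (where this series converges); $\Gamma$ is Euler's gamma function. *)

theory Defs
  imports "HOL-Analysis.Analysis"
begin

definition lerch_phi :: "complex \<Rightarrow> nat \<Rightarrow> complex \<Rightarrow> complex" where
  "lerch_phi z s a = (\<Sum>k. z ^ k / (of_nat k + a) ^ s)"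

definition lerch_integrand :: "complex \<Rightarrow> nat \<Rightarrow> complex \<Rightarrow> real \<times> real \<Rightarrow> complex" where
  "lerch_integrand z s a p = (let x = fst p; y = snd p in
     (of_real (x * y)) powr (a - 1) / ((1 - z * of_real (x * y)) * of_real (ln (x * y)))
     * (\<Sum>k=1..s-2. of_nat ((s - 1) choose k) * of_real (ln x ^ k * ln y ^ (s - k - 1))))"

end

theory Submission
  imports Defs "HOL-Real_Asymp.Real_Asymp"
begin

text \<open>
  Expanding 1/(1 - zxy) as a geometric series reduces the double integral to the sum over n of
  z^n times the integral I(a + n) of the kernel (xy)^(b-1) P(x,y) / log(xy), where P is the binomial
  sum; termwise integration is justified by dominated convergence, because summability of the
  Lerch series forces |z| \<le> 1. By the binomial theorem
  P(x,y) = (log x + log y)^(s-1) - (log x)^(s-1) - (log y)^(s-1), so in the coordinates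
  (x, p) = (x, xy) the integral over x \<in> (p,1) is elementary and equals
  -(s-2)/s p^(b-1) (log p)^(s-1). Finally the integral of p^(b-1) (log p)^(s-1) over (0,1) is
  (-1)^(s-1) (s-1)! / b^s; this needs Re b > 0, which is forced by the integrability of the kernel.
\<close>

lemma binomial_ring_interior:
  fixes L M :: "'a::comm_ring_1"
  shows "(\<Sum>k=1..m. of_nat (Suc m choose k) * (L ^ k * M ^ (Suc m - k)))
           = (L + M) ^ Suc m - L ^ Suc m - M ^ Suc m"
proof -
  have "(L + M) ^ Suc m = (\<Sum>k\<le>Suc m. of_nat (Suc m choose k) * L ^ k * M ^ (Suc m - k))"
    by (rule binomial_ring)
  also have "\<dots> = (\<Sum>k\<le>m. of_nat (Suc m choose k) * L ^ k * M ^ (Suc m - k)) + L ^ Suc m"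
    unfolding sum.atMost_Suc by simp
  also have "(\<Sum>k\<le>m. of_nat (Suc m choose k) * L ^ k * M ^ (Suc m - k)) =
             M ^ Suc m + (\<Sum>k=1..m. of_nat (Suc m choose k) * L ^ k * M ^ (Suc m - k))"
    by (simp add: atMost_atLeast0 sum.atLeast_Suc_atMost)
  finally show ?thesis by (simp add: mult.assoc)
qed

definition log_binomial_sum :: "nat \<Rightarrow> real \<Rightarrow> real \<Rightarrow> real" where
  "log_binomial_sum s x y = (\<Sum>k=1..s-2. real ((s-1) choose k) * (ln x ^ k * ln y ^ (s-k-1)))"

lemma log_binomial_sum_eq:
  assumes "s \<ge> 2"
  shows "log_binomial_sum s x y = (ln x + ln y) ^ (s-1) - ln x ^ (s-1) - ln y ^ (s-1)"
proof -
  obtain m where s: "s = Suc (Suc m)" using assms by (metis add_2_eq_Suc le_Suc_ex)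
  have "log_binomial_sum s x y = (\<Sum>k=1..m. real (Suc m choose k) * (ln x ^ k * ln y ^ (Suc m - k)))"
    unfolding log_binomial_sum_def s by (intro sum.cong) auto
  then show ?thesis
    unfolding binomial_ring_interior s by simp
qed

definition lerch_kernel :: "nat \<Rightarrow> complex \<Rightarrow> real \<times> real \<Rightarrow> complex" where
  "lerch_kernel s b u = of_real (fst u * snd u) powr (b - 1) / of_real (ln (fst u * snd u))
                          * of_real (log_binomial_sum s (fst u) (snd u))"

lemma lerch_integrand_eq_kernel:
  "lerch_integrand z s a u = lerch_kernel s a u / (1 - z * of_real (fst u * snd u))"
  unfolding lerch_integrand_def lerch_kernel_def log_binomial_sum_def Let_def
  by (simp add: divide_inverse mult_ac)

lemma lerch_kernel_shift:
  assumes "fst u * snd u > 0"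
  shows "lerch_kernel s (b + of_nat n) u = of_real (fst u * snd u) ^ n * lerch_kernel s b u"
proof -
  define t where "t = fst u * snd u"
  have "t > 0" using assms by (simp add: t_def)
  have "b + of_nat n - 1 = (b - 1) + of_nat n" by simp
  then have "complex_of_real t powr (b + of_nat n - 1) = of_real t powr (b - 1) * of_real t powr of_nat n"
    by (simp only: powr_add)
  also have "of_real t powr of_nat n = (of_real t ^ n :: complex)"
    using \<open>t > 0\<close> by (intro powr_nat') simp
  finally show ?thesis
    unfolding lerch_kernel_def t_def[symmetric] by (simp add: mult_ac)
qed

lemma integral_log_binomial_defect:
  fixes p :: real
  assumes p: "0 < p" "p < 1" and s: "s \<ge> 2"
  shows "(\<integral>x. indicator {p..1} x *\<^sub>R ((ln p ^ (s-1) - ln x ^ (s-1) - (ln p - ln x) ^ (s-1)) / x) \<partial>lborel)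
         = - (real (s-2) / real s) * ln p ^ s"
proof -
  define F where "F = (\<lambda>x. ln p ^ (s-1) * ln x - ln x ^ s / real s + (ln p - ln x) ^ s / real s)"
  have "(\<integral>x. indicator {p..1} x *\<^sub>R ((ln p ^ (s-1) - ln x ^ (s-1) - (ln p - ln x) ^ (s-1)) / x) \<partial>lborel)
        = F 1 - F p"
  proof (rule integral_FTC_atLeastAtMost)
    fix x assume "p \<le> x" "x \<le> 1"
    then have "x > 0" using p by simp
    then have "(F has_real_derivative ((ln p ^ (s-1) - ln x ^ (s-1) - (ln p - ln x) ^ (s-1)) / x)) (at x)"
      unfolding F_def using s by (auto intro!: derivative_eq_intros simp: diff_divide_distrib)
    then show "(F has_vector_derivative ((ln p ^ (s-1) - ln x ^ (s-1) - (ln p - ln x) ^ (s-1)) / x))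
                 (at x within {p..1})"
      by (simp add: has_real_derivative_iff_has_vector_derivative has_vector_derivative_at_within)
  qed (use p in \<open>auto intro!: continuous_intros\<close>)
  also have "F 1 - F p = - (real (s-2) / real s) * ln p ^ s"
  proof -
    obtain m where sm: "s = Suc (Suc m)" using s by (metis add_2_eq_Suc le_Suc_ex)
    show ?thesis unfolding F_def sm
      by (simp only: ln_one power_0_Suc diff_zero diff_self)
         (simp add: divide_simps del: of_nat_Suc, simp add: algebra_simps)
  qed
  finally show ?thesis .
qed

lemma tendsto_powr_ln_power_at_right_0:
  fixes c :: complex
  assumes "Re c > 0"
  shows "((\<lambda>t::real. of_real t powr c * of_real (ln t ^ k)) \<longlongrightarrow> 0) (at_right 0)"
proof -
  have "((\<lambda>t::real. t powr Re c * ln t ^ k) \<longlongrightarrow> 0) (at_right 0)"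
    using assms by real_asymp
  then have "((\<lambda>t::real. norm (of_real t powr c * of_real (ln t ^ k) :: complex)) \<longlongrightarrow> 0) (at_right 0)"
  proof (rule Lim_transform_eventually[OF tendsto_rabs_zero])
    show "\<forall>\<^sub>F t in at_right 0. \<bar>t powr Re c * ln t ^ k\<bar> = norm (of_real t powr c * of_real (ln t ^ k) :: complex)"
      by (rule eventually_mono[OF eventually_at_right_less[of 0]])
         (simp add: norm_mult norm_power norm_powr_real_powr abs_mult power_abs)
  qed
  then show ?thesis by (simp add: tendsto_norm_zero_iff)
qed

lemma continuous_on_powr_ln_power:
  fixes c :: complex
  assumes "Re c > 0"
  shows "continuous_on {0..1} (\<lambda>t::real. of_real t powr c * of_real (ln t ^ k))"
  unfolding continuous_on_eq_continuous_within
proof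
  fix t :: real assume t: "t \<in> {0..1}"
  show "continuous (at t within {0..1}) (\<lambda>t::real. of_real t powr c * of_real (ln t ^ k))"
  proof (cases "t = 0")
    case True
    have "at (0::real) within {0..1} = at_right 0"
      by (rule at_within_Icc_at_right) simp
    then show ?thesis using True tendsto_powr_ln_power_at_right_0[OF assms, of k]
      by (simp add: continuous_within)
  next
    case False
    then have "t > 0" using t by simp
    then have "isCont (\<lambda>t::real. of_real t powr c * of_real (ln t ^ k)) t"
      by (auto intro!: continuous_intros)
    then show ?thesis by (rule continuous_at_imp_continuous_within)
  qed
qed

text \<open>Integration by parts against \<open>t\<^sup>c\<close>, the boundary term vanishing since \<open>Re c > 0\<close>.\<close>
lemma has_integral_powr_ln_power:
  fixes c :: complex
  assumes "Re c > 0"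
  shows "((\<lambda>t::real. of_real t powr (c - 1) * of_real (ln t ^ k)) has_integral
            ((-1)^k * fact k / c^(k+1))) {0..1}"
  using assms
proof (induction k)
  case 0
  have "((\<lambda>t. complex_of_real t powr (c - 1)) has_integral
            (of_real 1 powr c / c - of_real 0 powr c / c)) {0..1}" using 0
    by (intro fundamental_theorem_of_calculus_interior)
       (auto intro!: continuous_intros derivative_eq_intros has_vector_derivative_real_field)
  then show ?case using 0 by simp
next
  case (Suc k)
  have c0: "c \<noteq> 0" using Suc by auto
  let ?F = "\<lambda>t::real. of_real t powr c * of_real (ln t ^ Suc k) :: complex"
  let ?f = "\<lambda>t::real. c * (of_real t powr (c - 1) * of_real (ln t ^ Suc k))
              + of_nat (Suc k) * (of_real t powr (c - 1) * of_real (ln t ^ k))"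
  have "(?f has_integral (?F 1 - ?F 0)) {0..1}"
  proof (rule fundamental_theorem_of_calculus_interior)
    show "continuous_on {0..1} ?F" by (rule continuous_on_powr_ln_power[OF Suc.prems])
    fix t :: real assume "t \<in> {0<..<1}"
    then have t0: "t > 0" by simp
    then have "complex_of_real t \<notin> \<real>\<^sub>\<le>\<^sub>0" by (auto simp: nonpos_Reals_def)
    then have "((\<lambda>w. w powr c * Ln w ^ Suc k) has_field_derivative
             (c * of_real t powr (c - 1) * Ln (of_real t) ^ Suc k +
              of_real t powr c * (of_nat (Suc k) * Ln (of_real t) ^ k * inverse (of_real t)))) (at (of_real t))"
      using t0 by (auto intro!: derivative_eq_intros) (cases k, auto simp: field_simps)
    also have "c * of_real t powr (c - 1) * Ln (of_real t) ^ Suc k +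
              of_real t powr c * (of_nat (Suc k) * Ln (of_real t) ^ k * inverse (of_real t)) = ?f t"
      using t0 by (simp add: Ln_of_real powr_diff field_simps)
    finally have "((\<lambda>t. of_real t powr c * Ln (of_real t) ^ Suc k) has_vector_derivative ?f t) (at t)"
      by (rule has_vector_derivative_real_field)
    then show "(?F has_vector_derivative ?f t) (at t)"
      by (rule has_vector_derivative_transform_within_open[of _ _ _ "{0<..}"])
         (use t0 in \<open>auto simp: Ln_of_real\<close>)
  qed simp
  then have "(?f has_integral 0) {0..1}" by simp
  from has_integral_diff[OF this has_integral_mult_right[OF Suc.IH[OF Suc.prems], of "of_nat (Suc k)"]]
  have "((\<lambda>t. c * (of_real t powr (c - 1) * of_real (ln t ^ Suc k))) has_integral
           - (of_nat (Suc k) * ((-1)^k * fact k / c^(k+1)))) {0..1}" by simp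
  from has_integral_mult_right[OF this, of "1/c"]
  have "((\<lambda>t. of_real t powr (c - 1) * of_real (ln t ^ Suc k)) has_integral
           1/c * (- (of_nat (Suc k) * ((-1)^k * fact k / c^(k+1))))) {0..1}"
    using c0 by simp
  also have "1/c * (- (of_nat (Suc k) * ((-1)^k * fact k / c^(k+1))))
               = (-1)^Suc k * fact (Suc k) / c^(Suc k+1)"
    using c0 by (simp add: field_simps)
  finally show ?case .
qed

lemma integral_inverse_Icc:
  fixes e c :: real
  assumes "0 < e" "e \<le> c"
  shows "(\<integral>p. indicator {e..c} p *\<^sub>R (1 / p) \<partial>lborel) = ln c - ln e"
proof (rule integral_FTC_atLeastAtMost)
  fix x assume "e \<le> x" "x \<le> c"
  then have "x > 0" using assms by simp
  then show "(ln has_vector_derivative 1 / x) (at x within {e..c})"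
    by (auto intro!: derivative_eq_intros
             simp flip: has_real_derivative_iff_has_vector_derivative)
qed (use assms in \<open>auto intro!: continuous_intros\<close>)

lemma inverse_le_norm_powr_ln_power:
  fixes b :: complex
  assumes p: "0 < p" "p \<le> exp (-1)" and b: "Re b \<le> 0"
  shows "1 / p \<le> norm (of_real p powr (b - 1) * of_real (ln p ^ m))"
proof -
  have "p < 1" using p(2) by (smt (verit) exp_less_one_iff)
  have "ln p \<le> -1" using p by (metis ln_exp ln_le_cancel_iff exp_gt_zero)
  have "1 / p = p powr (-1)" using p by (simp add: powr_minus_divide)
  also have "\<dots> \<le> p powr (Re b - 1)" using p \<open>p < 1\<close> b by (intro powr_mono') auto
  also have "\<dots> \<le> p powr (Re b - 1) * \<bar>ln p\<bar> ^ m"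
    using \<open>ln p \<le> -1\<close> by (simp add: mult_le_cancel_left1 one_le_power)
  also have "\<dots> = norm (of_real p powr (b - 1) * of_real (ln p ^ m))"
    using p by (simp add: norm_mult norm_power norm_powr_real_powr)
  finally show ?thesis .
qed

text \<open>For \<open>Re b \<le> 0\<close> the integrand dominates \<open>1/p\<close> near \<open>0\<close>, whose integral diverges logarithmically.\<close>
lemma Re_pos_if_integrable_powr_ln_power:
  fixes b :: complex
  assumes int: "integrable lborel (\<lambda>p::real. indicator {0<..<1} p *\<^sub>R (of_real p powr (b-1) * of_real (ln p ^ m)))"
  shows "Re b > 0"
proof (rule ccontr)
  assume "\<not> Re b > 0"
  define h where "h = (\<lambda>p::real. indicator {0<..<1} p *\<^sub>R (of_real p powr (b-1) * of_real (ln p ^ m) :: complex))"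
  define N where "N = (\<integral>p. norm (h p) \<partial>lborel)"
  define e where "e = exp (- N - 2)"
  have "N \<ge> 0" unfolding N_def by simp
  then have e: "0 < e" "e \<le> exp (-1)" unfolding e_def by auto
  have "ln (exp (-1)) - ln e = (\<integral>p. indicator {e..exp (-1)} p *\<^sub>R (1 / p) \<partial>lborel)"
    using integral_inverse_Icc[OF e] by simp
  also have "\<dots> \<le> N" unfolding N_def
  proof (rule integral_mono)
    have "continuous_on {e..exp (- 1)} (\<lambda>p::real. 1 / p)"
      using e by (auto intro!: continuous_intros)
    from borel_integrable_atLeastAtMost'[OF this]
    show "integrable lborel (\<lambda>p. indicator {e..exp (- 1)} p *\<^sub>R (1 / p))"
      by (simp add: set_integrable_def)
    show "integrable lborel (\<lambda>p. norm (h p))" using int unfolding h_def by (rule integrable_norm)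
    fix p :: real
    have e1: "exp (-1) < (1::real)" by simp
    have "{e..exp (-1)} \<subseteq> {0<..<1::real}" using e by (auto intro: order_le_less_trans[OF _ e1])
    show "indicator {e..exp (- 1)} p *\<^sub>R (1 / p) \<le> norm (h p)"
    proof (cases "p \<in> {e..exp (-1)}")
      case True
      moreover have "p \<in> {0<..<1}" using True \<open>{e..exp (-1)} \<subseteq> {0<..<1}\<close> by blast
      ultimately show ?thesis
        using inverse_le_norm_powr_ln_power[of p b m] \<open>\<not> Re b > 0\<close> by (simp add: h_def)
    qed (simp add: h_def)
  qed
  finally show False by (simp add: e_def)
qed

section \<open>Integration in the coordinates (x, xy)\<close>

lemma lborel_integral_divide_arg:
  fixes g :: "real \<Rightarrow> 'a::{banach, second_countable_topology}"
  assumes "c > 0"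
  shows "integrable lborel (\<lambda>p. g (p / c)) \<longleftrightarrow> integrable lborel g"
    and "(\<integral>p. g (p / c) \<partial>lborel) = c *\<^sub>R (\<integral>y. g y \<partial>lborel)"
  using assms lborel_integrable_real_affine_iff[of "1/c" g 0]
    lborel_integral_real_affine[of "1/c" g 0]
  by (simp_all add: divide_inverse mult.commute)

lemma lborel_integral_shear:
  fixes G :: "real \<times> real \<Rightarrow> complex"
  assumes int: "integrable lborel G"
    and G0: "\<And>x y. x \<le> 0 \<Longrightarrow> G (x, y) = 0"
  defines "K \<equiv> (\<lambda>u. G (fst u, snd u / fst u) / of_real (fst u))"
  shows "integrable lborel (\<lambda>p. \<integral>x. K (x, p) \<partial>lborel)"
    and "integral\<^sup>L lborel G = (\<integral>p. (\<integral>x. K (x, p) \<partial>lborel) \<partial>lborel)"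
proof -
  have intP: "integrable (lborel \<Otimes>\<^sub>M lborel) G" using int by (simp add: lborel_prod)
  have [measurable]: "G \<in> borel_measurable (lborel \<Otimes>\<^sub>M lborel)"
    using intP by (rule borel_measurable_integrable)
  have Km[measurable]: "K \<in> borel_measurable (lborel \<Otimes>\<^sub>M lborel)"
    unfolding K_def by measurable
  have slice_integral: "(\<integral>p. K (x, p) \<partial>lborel) = (\<integral>y. G (x, y) \<partial>lborel)" for x
    using lborel_integral_divide_arg(2)[of x "\<lambda>y. G (x, y)"]
    by (cases "x > 0") (simp_all add: K_def G0 scaleR_conv_of_real)
  have slice_norm: "(\<integral>p. norm (K (x, p)) \<partial>lborel) = (\<integral>y. norm (G (x, y)) \<partial>lborel)" for x
    using lborel_integral_divide_arg(2)[of x "\<lambda>y. norm (G (x, y))"]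
    by (cases "x > 0") (simp_all add: K_def G0 norm_divide)
  have slice_integrable: "integrable lborel (\<lambda>p. K (x, p))" if "integrable lborel (\<lambda>y. G (x, y))" for x
    using that lborel_integral_divide_arg(1)[of x "\<lambda>y. G (x, y)"]
    by (cases "x > 0") (simp_all add: K_def G0)
  have intK: "integrable (lborel \<Otimes>\<^sub>M lborel) K"
  proof (rule lborel_pair.Fubini_integrable)
    show "integrable lborel (\<lambda>x. \<integral>p. norm (K (x, p)) \<partial>lborel)"
      using lborel_pair.integrable_fst'[OF integrable_norm[OF intP]] by (simp add: slice_norm)
    show "AE x in lborel. integrable lborel (\<lambda>p. K (x, p))"
      using lborel_pair.AE_integrable_fst'[OF intP] by (auto elim!: eventually_mono intro: slice_integrable)
  qed (rule Km)
  then have intK': "integrable (lborel \<Otimes>\<^sub>M lborel) (\<lambda>(p, x). K (x, p))"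
    by (simp add: lborel_pair.integrable_product_swap_iff)
  then show "integrable lborel (\<lambda>p. \<integral>x. K (x, p) \<partial>lborel)"
    using lborel_pair.integrable_fst'[OF intK'] by simp
  have "integral\<^sup>L lborel G = (\<integral>x. (\<integral>y. G (x, y) \<partial>lborel) \<partial>lborel)"
    using lborel_pair.integral_fst'[OF intP] by (simp add: lborel_prod)
  also have "\<dots> = integral\<^sup>L (lborel \<Otimes>\<^sub>M lborel) K"
    using lborel_pair.integral_fst'[OF intK] by (simp add: slice_integral)
  also have "\<dots> = (\<integral>(p, x). K (x, p) \<partial>(lborel \<Otimes>\<^sub>M lborel))"
    by (rule lborel_pair.integral_product_swap[OF Km, symmetric])
  also have "\<dots> = (\<integral>p. (\<integral>x. K (x, p) \<partial>lborel) \<partial>lborel)"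
    using lborel_pair.integral_fst'[OF intK'] by simp
  finally show "integral\<^sup>L lborel G = (\<integral>p. (\<integral>x. K (x, p) \<partial>lborel) \<partial>lborel)" .
qed

lemma shear_mem_unit_square_iff:
  "(x, p / x) \<in> {0<..<1} \<times> {0<..<1} \<longleftrightarrow> 0 < p \<and> p < x \<and> x < (1::real)"
  by (cases "x > 0") (auto simp: zero_less_divide_iff)

lemma lerch_kernel_shear:
  assumes "s \<ge> 2" "0 < p" "p < x"
  shows "lerch_kernel s b (x, p / x) / of_real x
           = of_real p powr (b - 1) / of_real (ln p)
             * of_real ((ln p ^ (s-1) - ln x ^ (s-1) - (ln p - ln x) ^ (s-1)) / x)"
proof -
  have "x > 0" "x * (p / x) = p" using assms by auto
  moreover have "log_binomial_sum s x (p / x) = ln p ^ (s-1) - ln x ^ (s-1) - (ln p - ln x) ^ (s-1)"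
    using assms \<open>x > 0\<close> by (simp add: log_binomial_sum_eq ln_div)
  ultimately show ?thesis
    unfolding lerch_kernel_def by (simp add: divide_inverse mult_ac)
qed

lemma lerch_kernel_shear_integral:
  fixes b :: complex
  assumes s: "s \<ge> 2"
  shows "(\<integral>x. (indicator ({0<..<1} \<times> {0<..<1}) (x, p/x) *\<^sub>R lerch_kernel s b (x, p/x)) / of_real x \<partial>lborel)
     = indicator {0<..<1} p *\<^sub>R
         (- of_real (real (s-2) / real s) * (of_real p powr (b-1) * of_real (ln p ^ (s-1))))"
proof (cases "p \<in> {0<..<1}")
  case False
  then have "(x, p/x) \<notin> {0<..<1} \<times> {0<..<1}" for x
    unfolding shear_mem_unit_square_iff by auto
  then show ?thesis using False by simp
next
  case True
  then have p: "0 < p" "p < 1" by auto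
  define cp where "cp = of_real p powr (b-1) / of_real (ln p)"
  define R where "R = (\<lambda>x. (ln p ^ (s-1) - ln x ^ (s-1) - (ln p - ln x) ^ (s-1)) / x)"
  have "(\<integral>x. (indicator ({0<..<1} \<times> {0<..<1}) (x, p/x) *\<^sub>R lerch_kernel s b (x, p/x)) / of_real x \<partial>lborel)
        = (\<integral>x. cp * of_real (indicator {p<..<1} x *\<^sub>R R x) \<partial>lborel)"
    using s p by (intro Bochner_Integration.integral_cong)
       (auto simp: indicator_def shear_mem_unit_square_iff lerch_kernel_shear cp_def R_def)
  also have "\<dots> = (\<integral>x. cp * of_real (indicator {p..1} x *\<^sub>R R x) \<partial>lborel)"
  proof (rule integral_cong_AE)
    have I: "indicator {p<..<1} x = (indicator {p..1} x :: real)" if "x \<noteq> p" "x \<noteq> 1" for x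
      using that by (auto simp: indicator_def)
    show "AE x in lborel. cp * of_real (indicator {p<..<1} x *\<^sub>R R x) = cp * of_real (indicator {p..1} x *\<^sub>R R x)"
      using AE_lborel_singleton[of p] AE_lborel_singleton[of 1] by eventually_elim (simp add: I)
  qed (unfold R_def, measurable)+
  also have "\<dots> = cp * of_real (- (real (s-2) / real s) * ln p ^ s)"
    using integral_log_binomial_defect[OF p s]
    by (simp only: integral_mult_right_zero integral_complex_of_real R_def)
  also have "\<dots> = indicator {0<..<1} p *\<^sub>R
                    (- of_real (real (s-2) / real s) * (of_real p powr (b-1) * of_real (ln p ^ (s-1))))"
  proof -
    obtain m where sm: "s = Suc m" using s by (cases s) auto
    have "complex_of_real (ln p) \<noteq> 0" using p by simp
    then show ?thesis unfolding cp_def sm using True by (simp add: field_simps)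
  qed
  finally show ?thesis .
qed

lemma set_integral_lerch_kernel:
  fixes b :: complex
  assumes s: "s \<ge> 3"
    and int: "set_integrable lborel ({0<..<1} \<times> {0<..<1}) (lerch_kernel s b)"
  shows "set_lebesgue_integral lborel ({0<..<1} \<times> {0<..<1}) (lerch_kernel s b)
         = - of_real (real (s-2) / real s) * ((-1)^(s-1) * fact (s-1) / b^s)"
proof -
  define G where "G = (\<lambda>u. indicator ({0<..<1} \<times> {0<..<1}) u *\<^sub>R lerch_kernel s b u)"
  define c :: complex where "c = of_real (real (s-2) / real s)"
  define h where "h = (\<lambda>p::real. of_real p powr (b-1) * of_real (ln p ^ (s-1)) :: complex)"
  have "real (s-2) / real s \<noteq> 0" using s by simp
  then have "c \<noteq> 0" unfolding c_def by (simp only: of_real_eq_0_iff not_False_eq_True)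
  have intG: "integrable lborel G" using int unfolding G_def set_integrable_def .
  have "G (x, y) = 0" if "x \<le> 0" for x y using that by (simp add: G_def)
  note shear = lborel_integral_shear[OF intG this]
  have inner: "(\<integral>x. G (x, p/x) / of_real x \<partial>lborel) = indicator {0<..<1} p *\<^sub>R (- c * h p)" for p
    unfolding G_def c_def h_def using s by (simp add: lerch_kernel_shear_integral)
  have "integrable lborel (\<lambda>p. (indicator {0<..<1} p *\<^sub>R (- c * h p)) / (- c))"
    using shear(1) by (simp add: inner)
  then have int_h: "set_integrable lborel {0<..<1} h"
    using \<open>c \<noteq> 0\<close> by (simp add: scaleR_conv_of_real set_integrable_def)
  then have "Re b > 0"
    unfolding h_def set_integrable_def by (rule Re_pos_if_integrable_powr_ln_power)
  have "set_lebesgue_integral lborel ({0<..<1} \<times> {0<..<1}) (lerch_kernel s b) = integral\<^sup>L lborel G"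
    unfolding set_lebesgue_integral_def G_def ..
  also have "\<dots> = (\<integral>p. indicator {0<..<1} p *\<^sub>R (- c * h p) \<partial>lborel)"
    using shear(2) by (simp add: inner)
  also have "\<dots> = - c * set_lebesgue_integral lborel {0<..<1} h"
    by (simp add: set_lebesgue_integral_def scaleR_conv_of_real mult_ac)
  also have "set_lebesgue_integral lborel {0<..<1} h = integral {0<..<1} h"
    using int_h by (rule set_borel_integral_eq_integral(2))
  also have "\<dots> = (-1)^(s-1) * fact (s-1) / b^s"
    using has_integral_powr_ln_power[OF \<open>Re b > 0\<close>, of "s-1"] s
    by (intro integral_unique) (simp add: h_def has_integral_Icc_iff_Ioo)
  finally show ?thesis unfolding c_def .
qed

section \<open>Geometric expansion\<close>

lemma integrable_mult_bounded:
  fixes f m :: "'a \<Rightarrow> 'b::{real_normed_field, banach, second_countable_topology}"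
  assumes f: "integrable M f" and m: "m \<in> borel_measurable M"
    and bound: "\<And>u. f u \<noteq> 0 \<Longrightarrow> norm (m u) \<le> B"
  shows "integrable M (\<lambda>u. m u * f u)"
proof (rule Bochner_Integration.integrable_bound[OF _ _ AE_I2])
  show "integrable M (\<lambda>u. B * norm (f u))"
    using f by (intro integrable_mult_right integrable_norm)
  show "(\<lambda>u. m u * f u) \<in> borel_measurable M"
    using m borel_measurable_integrable[OF f] by (rule borel_measurable_times)
  show "norm (m u * f u) \<le> norm (B * norm (f u))" for u
  proof (cases "f u = 0")
    case False
    have "norm (m u * f u) = norm (m u) * norm (f u)" by (rule norm_mult)
    also have "\<dots> \<le> B * norm (f u)" using bound[OF False] by (rule mult_right_mono) simp
    also have "\<dots> \<le> norm (B * norm (f u))" by (simp add: abs_mult mult_right_mono)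
    finally show ?thesis .
  qed simp
qed

lemma tendsto_integral_one_minus_power_mult:
  fixes f w :: "'a \<Rightarrow> 'b::{real_normed_field, banach, second_countable_topology}"
  assumes f: "integrable M f" and w: "w \<in> borel_measurable M"
    and less_1: "\<And>u. f u \<noteq> 0 \<Longrightarrow> norm (w u) < 1"
  shows "(\<lambda>N. \<integral>u. (1 - w u ^ N) * f u \<partial>M) \<longlonglongrightarrow> integral\<^sup>L M f"
proof (rule integral_dominated_convergence[where w = "\<lambda>u. 2 * norm (f u)"])
  have bound: "norm (1 - w u ^ N) \<le> 2" if "f u \<noteq> 0" for u N
  proof -
    have "norm (w u ^ N) \<le> 1"
      using less_1[OF that] by (simp add: norm_power power_le_one)
    then show ?thesis using norm_triangle_ineq4[of 1 "w u ^ N"] by simp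
  qed
  show "f \<in> borel_measurable M" using f by (rule borel_measurable_integrable)
  show "integrable M (\<lambda>u. 2 * norm (f u))" using f by (intro integrable_mult_right integrable_norm)
  show "(\<lambda>u. (1 - w u ^ N) * f u) \<in> borel_measurable M" for N
    using integrable_mult_bounded[OF f _ bound] w by (auto intro: borel_measurable_integrable)
  show "AE u in M. (\<lambda>N. (1 - w u ^ N) * f u) \<longlonglongrightarrow> f u"
  proof (rule AE_I2)
    fix u
    show "(\<lambda>N. (1 - w u ^ N) * f u) \<longlonglongrightarrow> f u"
    proof (cases "f u = 0")
      case False
      then have "(\<lambda>N. (1 - w u ^ N) * f u) \<longlonglongrightarrow> (1 - 0) * f u"
        by (intro tendsto_intros LIMSEQ_power_zero less_1)
      then show ?thesis by simp
    qed simp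
  qed
  show "AE u in M. norm ((1 - w u ^ N) * f u) \<le> 2 * norm (f u)" for N
  proof (rule AE_I2)
    fix u
    show "norm ((1 - w u ^ N) * f u) \<le> 2 * norm (f u)"
      using bound[of u N] by (cases "f u = 0") (simp_all add: norm_mult mult_right_mono)
  qed
qed

lemma norm_le_1_if_summable_lerch:
  fixes z a :: complex
  assumes sm: "summable (\<lambda>k. z ^ k / (of_nat k + a) ^ s)" and nz: "\<forall>k::nat. of_nat k + a \<noteq> 0"
  shows "norm z \<le> 1"
proof (rule ccontr)
  assume "\<not> norm z \<le> 1"
  then have "norm z > 1" by simp
  define A where "A = norm a + 1"
  have "A > 0" unfolding A_def by (simp add: add_nonneg_pos)
  have "filterlim (\<lambda>k::nat. r ^ k / (real k + A) ^ s) at_top at_top" if "r > 1" for r :: real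
    using that \<open>A > 0\<close> by real_asymp
  then have "filterlim (\<lambda>k::nat. norm z ^ k / (real k + A) ^ s) at_top at_top"
    using \<open>norm z > 1\<close> .
  then have "eventually (\<lambda>k::nat. norm z ^ k / (real k + A) ^ s \<ge> 1) at_top"
    by (simp add: filterlim_at_top)
  then have "eventually (\<lambda>k::nat. norm (z ^ k / (of_nat k + a) ^ s) \<ge> 1) at_top"
  proof (rule eventually_mono)
    fix k :: nat assume "norm z ^ k / (real k + A) ^ s \<ge> 1"
    moreover have "norm (of_nat k + a) > 0" using nz by simp
    moreover have "norm (of_nat k + a) \<le> real k + A"
      using norm_triangle_ineq[of "of_nat k" a] by (simp add: A_def)
    then have "norm (of_nat k + a) ^ s \<le> (real k + A) ^ s"
      by (intro power_mono) simp_all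
    ultimately show "norm (z ^ k / (of_nat k + a) ^ s) \<ge> 1"
      by (simp add: norm_divide norm_power frac_le order_trans)
  qed
  moreover have "(\<lambda>k. norm (z ^ k / (of_nat k + a) ^ s)) \<longlonglongrightarrow> 0"
    using summable_LIMSEQ_zero[OF sm] by (simp add: tendsto_norm_zero_iff)
  then have "eventually (\<lambda>k. norm (z ^ k / (of_nat k + a) ^ s) < 1) sequentially"
    by (rule order_tendstoD(2)) simp
  ultimately have "eventually (\<lambda>k::nat. False) sequentially"
    by eventually_elim simp
  then show False by simp
qed

lemma unit_square_mult_bounds:
  assumes "u \<in> {0<..<1} \<times> {0<..<1}"
  shows "0 < fst u * snd u" "fst u * snd u < (1::real)"
  using assms mult_strict_mono[of "fst u" 1 "snd u" 1] by auto

lemma norm_mult_unit_square_less_1: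
  fixes z :: complex
  assumes "norm z \<le> 1" "u \<in> {0<..<1} \<times> {0<..<1}"
  shows "norm (z * of_real (fst u * snd u)) < 1"
proof -
  note xy = unit_square_mult_bounds[OF assms(2)]
  have "norm (z * of_real (fst u * snd u)) = norm z * (fst u * snd u)"
    using xy by (simp add: norm_mult del: of_real_mult)
  also have "\<dots> \<le> fst u * snd u"
    using assms(1) xy by (intro mult_left_le_one_le) auto
  finally show ?thesis using xy by simp
qed

lemma lerch_kernel_shift_eq_integrand:
  assumes "norm z \<le> 1" "u \<in> {0<..<1} \<times> {0<..<1}"
  shows "lerch_kernel s (a + of_nat n) u
           = of_real (fst u * snd u) ^ n * (1 - z * of_real (fst u * snd u)) * lerch_integrand z s a u"
proof -
  have "1 - z * of_real (fst u * snd u) \<noteq> 0"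
    using norm_mult_unit_square_less_1[OF assms] by auto
  moreover have "fst u * snd u > 0" using unit_square_mult_bounds[OF assms(2)] by simp
  ultimately show ?thesis
    by (simp add: lerch_kernel_shift lerch_integrand_eq_kernel)
qed

lemma set_integrable_lerch_kernel_shift:
  fixes z a :: complex
  assumes z: "norm z \<le> 1"
    and int: "set_integrable lborel ({0<..<1} \<times> {0<..<1}) (lerch_integrand z s a)"
  shows "set_integrable lborel ({0<..<1} \<times> {0<..<1}) (lerch_kernel s (a + of_nat n))"
proof -
  let ?Q = "{0<..<1} \<times> {0<..<1} :: (real \<times> real) set"
  let ?F = "\<lambda>u. indicator ?Q u *\<^sub>R lerch_integrand z s a u"
  let ?m = "\<lambda>u::real \<times> real. of_real (fst u * snd u) ^ n * (1 - z * of_real (fst u * snd u))"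
  have eq: "indicator ?Q u *\<^sub>R lerch_kernel s (a + of_nat n) u = ?m u * ?F u" for u
    using lerch_kernel_shift_eq_integrand[OF z, of u] by (cases "u \<in> ?Q") simp_all
  have "integrable lborel (\<lambda>u. ?m u * ?F u)"
  proof (rule integrable_mult_bounded)
    show "integrable lborel ?F" using int by (simp add: set_integrable_def)
    show "?m \<in> borel_measurable lborel"
      by (simp only: measurable_lborel2) (intro borel_measurable_continuous_onI continuous_intros)
    fix u assume "?F u \<noteq> 0"
    then have u: "u \<in> ?Q" by (cases "u \<in> ?Q") simp_all
    have "norm (of_real (fst u * snd u) ^ n :: complex) \<le> 1"
      using unit_square_mult_bounds[OF u] by (simp add: norm_power power_le_one del: of_real_mult)
    moreover have "norm (1 - z * of_real (fst u * snd u)) \<le> 2"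
      using norm_mult_unit_square_less_1[OF z u]
        norm_triangle_ineq4[of 1 "z * of_real (fst u * snd u)"] by simp
    ultimately have "norm (of_real (fst u * snd u) ^ n :: complex) * norm (1 - z * of_real (fst u * snd u))
                       \<le> 1 * 2"
      by (intro mult_mono) auto
    then show "norm (?m u) \<le> 2" by (simp only: norm_mult mult_1)
  qed
  then show ?thesis unfolding set_integrable_def eq .
qed

lemma lerch_integral_eq_lim_kernel_integrals:
  fixes z a :: complex
  assumes z: "norm z \<le> 1"
    and int: "set_integrable lborel ({0<..<1} \<times> {0<..<1}) (lerch_integrand z s a)"
  shows "(\<lambda>N. \<Sum>n<N. z ^ n * set_lebesgue_integral lborel ({0<..<1} \<times> {0<..<1}) (lerch_kernel s (a + of_nat n)))
           \<longlonglongrightarrow> set_lebesgue_integral lborel ({0<..<1} \<times> {0<..<1}) (lerch_integrand z s a)"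
proof -
  let ?Q = "{0<..<1} \<times> {0<..<1} :: (real \<times> real) set"
  let ?F = "\<lambda>u. indicator ?Q u *\<^sub>R lerch_integrand z s a u"
  let ?w = "\<lambda>u::real \<times> real. z * of_real (fst u * snd u)"
  let ?K = "\<lambda>n u. indicator ?Q u *\<^sub>R lerch_kernel s (a + of_nat n) u"
  have partial_sum: "(1 - ?w u ^ N) * ?F u = (\<Sum>n<N. z ^ n * ?K n u)" for N u
  proof (cases "u \<in> ?Q")
    case True
    have "(\<Sum>n<N. z ^ n * lerch_kernel s (a + of_nat n) u) = ((1 - ?w u) * (\<Sum>n<N. ?w u ^ n)) * ?F u"
      using True by (simp add: lerch_kernel_shift_eq_integrand[OF z] sum_distrib_left sum_distrib_right
                               power_mult_distrib mult_ac)
    then show ?thesis using True by (simp add: one_diff_power_eq)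
  qed simp
  have "(\<lambda>N. \<integral>u. (1 - ?w u ^ N) * ?F u \<partial>lborel) \<longlonglongrightarrow> integral\<^sup>L lborel ?F"
  proof (rule tendsto_integral_one_minus_power_mult)
    show "integrable lborel ?F" using int by (simp add: set_integrable_def)
    show "?w \<in> borel_measurable lborel"
      by (simp only: measurable_lborel2) (intro borel_measurable_continuous_onI continuous_intros)
    fix u assume "?F u \<noteq> 0"
    then have "u \<in> ?Q" by (cases "u \<in> ?Q") simp_all
    then show "norm (?w u) < 1" by (rule norm_mult_unit_square_less_1[OF z])
  qed
  moreover have "(\<integral>u. (1 - ?w u ^ N) * ?F u \<partial>lborel) = (\<Sum>n<N. z ^ n * integral\<^sup>L lborel (?K n))" for N
  proof -
    have "integrable lborel (?K n)" for n
      using set_integrable_lerch_kernel_shift[OF z int] by (simp add: set_integrable_def)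
    then have "(\<integral>u. (1 - ?w u ^ N) * ?F u \<partial>lborel) = (\<Sum>n<N. integral\<^sup>L lborel (\<lambda>u. z ^ n * ?K n u))"
      unfolding partial_sum by (intro Bochner_Integration.integral_sum integrable_mult_right)
    then show ?thesis by (simp only: integral_mult_right_zero)
  qed
  ultimately show ?thesis by (simp add: set_lebesgue_integral_def)
qed

theorem theorem3p4:
  fixes z a :: complex and s :: nat
  assumes "s \<ge> 2"
    and "\<forall>k::nat. of_nat k + a \<noteq> 0"
    and "summable (\<lambda>k. z ^ k / (of_nat k + a) ^ s)"
    and "set_integrable lborel ({0<..<1} \<times> {0<..<1}) (lerch_integrand z s a)"
  shows "of_nat (s - 2) * (-1) ^ s / of_nat s * lerch_phi z s a * Gamma (of_nat s)
         = set_lebesgue_integral lborel ({0<..<1} \<times> {0<..<1}) (lerch_integrand z s a)"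
proof (cases "s = 2")
  case True
  then show ?thesis by (simp add: lerch_integrand_def set_lebesgue_integral_def)
next
  case False
  then have s: "s \<ge> 3" using assms(1) by simp
  define C :: complex where "C = - of_real (real (s-2) / real s) * ((-1)^(s-1) * fact (s-1))"
  have z: "norm z \<le> 1" using assms(2,3) by (rule norm_le_1_if_summable_lerch[rotated])
  have "set_lebesgue_integral lborel ({0<..<1} \<times> {0<..<1}) (lerch_kernel s (a + of_nat n))
          = C / (of_nat n + a) ^ s" for n
    using set_integral_lerch_kernel[OF s set_integrable_lerch_kernel_shift[OF z assms(4)]]
    by (simp add: C_def add.commute)
  then have "(\<lambda>N. \<Sum>n<N. z ^ n * set_lebesgue_integral lborel ({0<..<1} \<times> {0<..<1}) (lerch_kernel s (a + of_nat n)))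
               \<longlonglongrightarrow> C * lerch_phi z s a"
    unfolding lerch_phi_def
    using tendsto_mult_left[OF summable_LIMSEQ[OF assms(3)], of C]
    by (simp add: sum_distrib_left mult.commute)
  with lerch_integral_eq_lim_kernel_integrals[OF z assms(4)]
  have "set_lebesgue_integral lborel ({0<..<1} \<times> {0<..<1}) (lerch_integrand z s a) = C * lerch_phi z s a"
    using LIMSEQ_unique by blast
  moreover have "Gamma (of_nat s :: complex) = fact (s - 1)"
    using Gamma_fact[of "s - 1"] s by (simp add: of_nat_diff)
  moreover obtain m where "s = Suc m" using s by (cases s) auto
  ultimately show ?thesis by (simp add: C_def field_simps)
qed

end
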